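(* Let $m \geqslant 5$ and $k \geqslant 2$ be integers, let $\Delta = \{1,\ldots,m\}^k$, and let $M = S_m \wr S_k$ act on $\Delta$ in product action, identified with a subgroup of $\mathrm{Sym}(\Delta) \cong S_{m^k}$. Let $u = (1\,2\,\cdots\,m) \in S_m$ if $m$ is odd and $u = (1\,2\,\cdots\,m-1)$ if $m$ is even, and let $U = \langle u\rangle$. Let $i \in \{2,\ldots,k\}$ and $r \in \{1,\ldots,m\}$, let $T_r$ be the stabiliser of $r$ in $S_m$, and let $W_i$ be the pointwise stabiliser of $1$ and $i$ in $S_k$. Then there exists $x \in \mathrm{Alt}(\Delta)$ such that \[ M \cap M^{x} = \left(U \times (S_m)^{i-2} \times T_r \times (S_m)^{k-i}\right) \rtimes W_i, \] i.e. $M \cap M^x$ consists of the elements $(v_1,\ldots,v_k)w \in M$ with $v_1 \in U$, $v_i \in T_r$ and $w \in W_i$.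
   Context: In the product action, the base group $(S_m)^k$ acts coordinatewise on $\Delta$ and the top group $S_k$ permutes coordinates. *)

theory Defs
  imports "HOL-Library.FuncSet" "HOL-Combinatorics.Permutations"
begin

definition Delta :: "nat \<Rightarrow> nat \<Rightarrow> (nat \<Rightarrow> nat) set" where
  "Delta m k = {1..k} \<rightarrow>\<^sub>E {1..m}"

text \<open>Product action of the base element v = (v_1,...,v_k) followed by the coordinate
  permutation w; identity outside Delta.\<close>
definition prod_act :: "nat \<Rightarrow> nat \<Rightarrow> (nat \<Rightarrow> nat \<Rightarrow> nat) \<Rightarrow> (nat \<Rightarrow> nat)
    \<Rightarrow> (nat \<Rightarrow> nat) \<Rightarrow> (nat \<Rightarrow> nat)" where
  "prod_act m k v w = (\<lambda>\<delta>. if \<delta> \<in> Delta m k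
      then (\<lambda>j\<in>{1..k}. v j (\<delta> (inv w j))) else \<delta>)"

definition wreath_M :: "nat \<Rightarrow> nat \<Rightarrow> ((nat \<Rightarrow> nat) \<Rightarrow> (nat \<Rightarrow> nat)) set" where
  "wreath_M m k = {prod_act m k v w | v w.
      (\<forall>j\<in>{1..k}. v j permutes {1..m}) \<and> w permutes {1..k}}"

definition Alt_Delta :: "nat \<Rightarrow> nat \<Rightarrow> ((nat \<Rightarrow> nat) \<Rightarrow> (nat \<Rightarrow> nat)) set" where
  "Alt_Delta m k = {x. x permutes Delta m k \<and> evenperm x}"

definition conj_set :: "('a \<Rightarrow> 'a) \<Rightarrow> ('a \<Rightarrow> 'a) set \<Rightarrow> ('a \<Rightarrow> 'a) set" where
  "conj_set x G = (\<lambda>g. inv x \<circ> g \<circ> x) ` G"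

definition ucyc :: "nat \<Rightarrow> nat \<Rightarrow> nat" where
  "ucyc m = (let L = (if odd m then m else m - 1) in
      (\<lambda>a. if 1 \<le> a \<and> a < L then a + 1 else if a = L then 1 else a))"

definition U_grp :: "nat \<Rightarrow> (nat \<Rightarrow> nat) set" where
  "U_grp m = range (\<lambda>n. ucyc m ^^ n)"

definition T_stab :: "nat \<Rightarrow> nat \<Rightarrow> (nat \<Rightarrow> nat) set" where
  "T_stab m r = {\<sigma>. \<sigma> permutes {1..m} \<and> \<sigma> r = r}"

definition W_stab :: "nat \<Rightarrow> nat \<Rightarrow> (nat \<Rightarrow> nat) set" where
  "W_stab k i = {w. w permutes {1..k} \<and> w 1 = 1 \<and> w i = i}"

definition target_grp :: "nat \<Rightarrow> nat \<Rightarrow> nat \<Rightarrow> nat \<Rightarrow> ((nat \<Rightarrow> nat) \<Rightarrow> (nat \<Rightarrow> nat)) set" where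
  "target_grp m k i r = {prod_act m k v w | v w.
      (\<forall>j\<in>{1..k}. v j permutes {1..m}) \<and> v 1 \<in> U_grp m \<and> v i \<in> T_stab m r
      \<and> w \<in> W_stab k i}"

end

theory Submission
  imports Defs
begin

text \<open>
  Take \<open>x = t\<^sup>2\<close>, where \<open>t\<close> applies \<open>u\<close> to the first coordinate of every point whose
  \<open>i\<close>-th coordinate is \<open>r\<close>; as a square, \<open>x\<close> is even. The elements \<open>(v, w)\<close> of the
  target group commute with \<open>x\<close>. Conversely, an element \<open>(v, w)\<close> of \<open>M\<close> maps two points
  differing only in coordinate \<open>p\<close> to two points differing only in coordinate \<open>w p\<close>. If
  \<open>f \<in> M\<close> and \<open>x f x\<^sup>-\<^sup>1 \<in> M\<close>, testing this on well-chosen pairs of points forces \<open>w\<close> to fix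
  \<open>1\<close> and \<open>i\<close>, \<open>v\<^sub>i\<close> to fix \<open>r\<close>, and \<open>v\<^sub>1\<close> to commute with \<open>u\<^sup>2\<close>. Since \<open>u\<close> has odd
  length it is a power of \<open>u\<^sup>2\<close>, and an \<open>L\<close>-cycle on \<open>{1..m}\<close> with \<open>m \<le> L + 1\<close> is its own
  centraliser, so \<open>v\<^sub>1 \<in> U\<close>.
\<close>

definition ucyc_len :: "nat \<Rightarrow> nat" where
  "ucyc_len m = (if odd m then m else m - 1)"

lemma ucyc_eq:
  "ucyc m a = (if 1 \<le> a \<and> a < ucyc_len m then a + 1 else if a = ucyc_len m then 1 else a)"
  unfolding ucyc_def ucyc_len_def Let_def by simp

lemma ucyc_funpow_in:
  assumes "a \<in> {1..ucyc_len m}"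
  shows "(ucyc m ^^ n) a = (a - 1 + n) mod ucyc_len m + 1"
proof (induction n)
  case 0
  have "a - 1 < ucyc_len m" using assms by auto
  then show ?case using assms by simp
next
  case (Suc n)
  define c where "c = a - 1 + n"
  have "c mod ucyc_len m < ucyc_len m" using assms by simp
  then have "ucyc m (c mod ucyc_len m + 1) = Suc c mod ucyc_len m + 1"
    by (auto simp: ucyc_eq mod_Suc)
  moreover have "(ucyc m ^^ Suc n) a = ucyc m (c mod ucyc_len m + 1)"
    using Suc.IH by (simp add: c_def)
  moreover have "Suc c = a - 1 + Suc n" by (simp add: c_def)
  ultimately show ?case by simp
qed

lemma ucyc_funpow_out:
  "1 \<le> m \<Longrightarrow> a \<notin> {1..ucyc_len m} \<Longrightarrow> (ucyc m ^^ n) a = a"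
  by (induction n) (auto simp: ucyc_eq ucyc_len_def)

lemma ucyc_funpow_len: "1 \<le> m \<Longrightarrow> ucyc m ^^ ucyc_len m = id"
proof
  fix a
  assume "1 \<le> m"
  show "(ucyc m ^^ ucyc_len m) a = id a"
  proof (cases "a \<in> {1..ucyc_len m}")
    case True
    have "(ucyc m ^^ ucyc_len m) a = (a - 1 + ucyc_len m) mod ucyc_len m + 1"
      by (rule ucyc_funpow_in[OF True])
    also have "\<dots> = a"
      using True by (simp only: mod_add_self2, subst mod_less) auto
    finally show ?thesis by simp
  next
    case False
    then show ?thesis using \<open>1 \<le> m\<close> by (simp add: ucyc_funpow_out)
  qed
qed

lemma ucyc_permutes: "1 \<le> m \<Longrightarrow> ucyc m permutes {1..m}"
  by (rule inj_imp_permutes) (auto simp: inj_on_def ucyc_eq ucyc_len_def split: if_splits)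

lemma funpow_comp_commute: "f \<circ> g = g \<circ> f \<Longrightarrow> f ^^ n \<circ> g = g \<circ> f ^^ n"
  by (induction n) (simp_all add: comp_assoc, metis comp_assoc)

lemma ucyc_eq_funpow_sq:
  assumes "1 \<le> m"
  shows "ucyc m = (ucyc m \<circ> ucyc m) ^^ ((ucyc_len m + 1) div 2)"
proof -
  have "odd (ucyc_len m)" using assms unfolding ucyc_len_def by auto
  then have "2 * ((ucyc_len m + 1) div 2) = ucyc_len m + 1" by simp
  then have "(ucyc m ^^ 2) ^^ ((ucyc_len m + 1) div 2) = ucyc m ^^ (ucyc_len m + 1)"
    by (simp add: funpow_mult)
  also have "\<dots> = ucyc m" using ucyc_funpow_len[OF assms] by (simp add: funpow_add)
  finally show ?thesis by (simp add: numeral_2_eq_2)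
qed

lemma commute_ucyc_imp_in_U_grp:
  assumes "3 \<le> m" and v: "v permutes {1..m}" and comm: "v \<circ> ucyc m = ucyc m \<circ> v"
  shows "v \<in> U_grp m"
proof -
  let ?u = "ucyc m" and ?L = "ucyc_len m"
  have L: "3 \<le> ?L" "?L \<le> m" "m \<le> ?L + 1" using assms(1) unfolding ucyc_len_def by presburger+
  have v_funpow: "v ((?u ^^ n) a) = (?u ^^ n) (v a)" for n a
    using funpow_comp_commute[OF comm[symmetric], of n] by (metis comp_apply)
  have v1: "v 1 \<in> {1..?L}"
  proof (rule ccontr)
    assume "v 1 \<notin> {1..?L}"
    then have "?u (v 1) = v 1" using ucyc_funpow_out[of m "v 1" 1] L by simp
    then have "v (?u 1) = v 1" using v_funpow[of 1 1] by simp
    then have "?u 1 = 1" using permutes_inj[OF v] by (simp add: inj_eq)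
    then show False using L by (simp add: ucyc_eq)
  qed
  define n where "n = v 1 - 1"
  have orbit_1: "(?u ^^ (a - 1)) 1 = a" if "a \<in> {1..?L}" for a
  proof -
    have "a - 1 < ?L" using that by auto
    then show ?thesis using ucyc_funpow_in[of 1 m "a - 1"] that L by simp
  qed
  have "v a = (?u ^^ n) a" for a
  proof (cases "a \<in> {1..?L}")
    case True
    have "v a = (?u ^^ (a - 1)) ((?u ^^ n) 1)"
      using v_funpow[of "a - 1" 1] orbit_1[OF True] orbit_1[OF v1] n_def by simp
    also have "\<dots> = (?u ^^ n) a"
      using orbit_1[OF True] by (metis add.commute comp_apply funpow_add)
    finally show ?thesis .
  next
    case False
    then have fixed: "(?u ^^ n) a = a" using L by (simp add: ucyc_funpow_out)
    show ?thesis
    proof (cases "a \<in> {1..m}")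
      case True
      then have "a = m" using False L by auto
      have "?u (v a) = v a" using v_funpow[of 1 a] ucyc_funpow_out[of m a 1] False L by simp
      then have "v a \<notin> {1..?L}" using L by (auto simp: ucyc_eq split: if_splits)
      moreover have "v a \<in> {1..m}" using True permutes_in_image[OF v] by blast
      ultimately show ?thesis using fixed \<open>a = m\<close> L by auto
    next
      case False
      then show ?thesis using fixed v by (simp add: permutes_not_in)
    qed
  qed
  then show ?thesis unfolding U_grp_def by auto
qed

lemma fun_upd_in_Delta:
  "\<delta> \<in> Delta m k \<Longrightarrow> j \<in> {1..k} \<Longrightarrow> c \<in> {1..m} \<Longrightarrow> \<delta>(j := c) \<in> Delta m k"
  unfolding Delta_def by (auto simp: PiE_iff extensional_def)

lemma finite_Delta: "finite (Delta m k)"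
  unfolding Delta_def by (simp add: finite_PiE)

lemma prod_act_apply:
  "\<delta> \<in> Delta m k \<Longrightarrow> j \<in> {1..k} \<Longrightarrow> prod_act m k v w \<delta> j = v j (\<delta> (inv w j))"
  unfolding prod_act_def by simp

lemma prod_act_outside: "\<delta> \<notin> Delta m k \<Longrightarrow> prod_act m k v w \<delta> = \<delta>"
  unfolding prod_act_def by simp

lemma prod_act_in_Delta:
  assumes "\<forall>j\<in>{1..k}. v j permutes {1..m}" and "w permutes {1..k}" and "\<delta> \<in> Delta m k"
  shows "prod_act m k v w \<delta> \<in> Delta m k"
proof -
  have "v j (\<delta> (inv w j)) \<in> {1..m}" if "j \<in> {1..k}" for j
  proof -
    have "inv w j \<in> {1..k}" using that permutes_in_image[OF permutes_inv[OF assms(2)]] by blast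
    then have "\<delta> (inv w j) \<in> {1..m}" using assms(3) unfolding Delta_def by auto
    moreover have "v j permutes {1..m}" using assms(1) that by blast
    ultimately show ?thesis by (simp only: permutes_in_image)
  qed
  moreover have "prod_act m k v w \<delta> = (\<lambda>j\<in>{1..k}. v j (\<delta> (inv w j)))"
    using assms(3) unfolding prod_act_def by simp
  ultimately show ?thesis unfolding Delta_def by (simp add: restrict_PiE_iff)
qed

text \<open>Coordinate \<open>a\<close> of the image of a point only depends on its coordinate \<open>inv w a\<close>.\<close>
lemma wreath_M_direction_unique:
  assumes g: "g \<in> wreath_M m k" and a: "a \<in> {1..k}"
    and \<delta>: "\<delta> \<in> Delta m k" "\<delta>' \<in> Delta m k" "\<forall>j\<in>{1..k}-{p}. \<delta> j = \<delta>' j" "g \<delta> a \<noteq> g \<delta>' a"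
    and \<eta>: "\<eta> \<in> Delta m k" "\<eta>' \<in> Delta m k" "\<forall>j\<in>{1..k}-{q}. \<eta> j = \<eta>' j" "g \<eta> a \<noteq> g \<eta>' a"
  shows "p = q"
proof -
  obtain v w where g_eq: "g = prod_act m k v w" and w: "w permutes {1..k}"
    using g unfolding wreath_M_def by blast
  have "inv w a = p'"
    if "\<epsilon> \<in> Delta m k" "\<epsilon>' \<in> Delta m k" "\<forall>j\<in>{1..k}-{p'}. \<epsilon> j = \<epsilon>' j" "g \<epsilon> a \<noteq> g \<epsilon>' a"
    for \<epsilon> \<epsilon>' p'
  proof (rule ccontr)
    assume "inv w a \<noteq> p'"
    moreover have "inv w a \<in> {1..k}" using a permutes_in_image[OF permutes_inv[OF w]] by blast
    ultimately have "\<epsilon> (inv w a) = \<epsilon>' (inv w a)" using that(3) by blast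
    then show False using that(1,2,4) a by (simp add: g_eq prod_act_apply)
  qed
  from this[OF \<delta>] this[OF \<eta>] show ?thesis by simp
qed

lemma conj_set_iff:
  assumes "bij x"
  shows "f \<in> conj_set x G \<longleftrightarrow> (\<exists>g\<in>G. g \<circ> x = x \<circ> f)"
proof -
  have inv_x: "inv x \<circ> x = id" "x \<circ> inv x = id"
    using inv_o_cancel[OF bij_is_inj] surj_iff[THEN iffD1, OF bij_is_surj] assms by blast+
  have "f = inv x \<circ> g \<circ> x \<longleftrightarrow> g \<circ> x = x \<circ> f" for g
  proof
    assume "f = inv x \<circ> g \<circ> x"
    then have "x \<circ> f = (x \<circ> inv x) \<circ> g \<circ> x" by (simp add: comp_assoc)
    then show "g \<circ> x = x \<circ> f" using inv_x by simp
  next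
    assume "g \<circ> x = x \<circ> f"
    then have "inv x \<circ> g \<circ> x = inv x \<circ> x \<circ> f" by (simp add: comp_assoc)
    then show "f = inv x \<circ> g \<circ> x" using inv_x by simp
  qed
  then show ?thesis unfolding conj_set_def by blast
qed

definition coord_twist :: "nat \<Rightarrow> nat \<Rightarrow> nat \<Rightarrow> nat \<Rightarrow> (nat \<Rightarrow> nat) \<Rightarrow> (nat \<Rightarrow> nat) \<Rightarrow> (nat \<Rightarrow> nat)"
  where "coord_twist m k i r c \<delta> = (if \<delta> \<in> Delta m k \<and> \<delta> i = r then \<delta>(1 := c (\<delta> 1)) else \<delta>)"

lemma coord_twist_apply:
  "\<delta> \<in> Delta m k \<Longrightarrow> coord_twist m k i r c \<delta> j = (if j = 1 \<and> \<delta> i = r then c (\<delta> 1) else \<delta> j)"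
  unfolding coord_twist_def by simp

lemma coord_twist_apply_other: "j \<noteq> 1 \<Longrightarrow> coord_twist m k i r c \<delta> j = \<delta> j"
  unfolding coord_twist_def by simp

lemma coord_twist_fixes: "\<delta> i \<noteq> r \<Longrightarrow> coord_twist m k i r c \<delta> = \<delta>"
  unfolding coord_twist_def by simp

lemma coord_twist_comp:
  assumes "i \<noteq> 1" "1 \<le> k" "c' ` {1..m} \<subseteq> {1..m}"
  shows "coord_twist m k i r c \<circ> coord_twist m k i r c' = coord_twist m k i r (c \<circ> c')"
proof
  fix \<delta>
  have "\<delta>(1 := c' (\<delta> 1)) \<in> Delta m k" if "\<delta> \<in> Delta m k"
  proof -
    have "\<delta> 1 \<in> {1..m}" using that assms(2) unfolding Delta_def by auto
    then have "c' (\<delta> 1) \<in> {1..m}" using assms(3) by blast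
    then show ?thesis using fun_upd_in_Delta that assms(2) by simp
  qed
  then show "(coord_twist m k i r c \<circ> coord_twist m k i r c') \<delta> = coord_twist m k i r (c \<circ> c') \<delta>"
    using assms(1) unfolding coord_twist_def by auto
qed

lemma coord_twist_id: "coord_twist m k i r id = id"
  unfolding coord_twist_def by auto

lemma coord_twist_permutes:
  assumes "i \<noteq> 1" "1 \<le> k" "c permutes {1..m}"
  shows "coord_twist m k i r c permutes Delta m k"
proof -
  have c_inv: "inv c permutes {1..m}" using permutes_inv[OF assms(3)] .
  have "coord_twist m k i r (inv c) \<circ> coord_twist m k i r c = id"
    using coord_twist_comp[OF assms(1,2) permutes_image[OF assms(3), THEN equalityD1]]
    by (simp add: permutes_inv_o[OF assms(3)] coord_twist_id)
  moreover have "coord_twist m k i r c \<circ> coord_twist m k i r (inv c) = id"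
    using coord_twist_comp[OF assms(1,2) permutes_image[OF c_inv, THEN equalityD1]]
    by (simp add: permutes_inv_o[OF assms(3)] coord_twist_id)
  ultimately have "bij (coord_twist m k i r c)" by (rule o_bij)
  moreover have "coord_twist m k i r c \<delta> = \<delta>" if "\<delta> \<notin> Delta m k" for \<delta>
    using that unfolding coord_twist_def by simp
  ultimately show ?thesis unfolding permutes_def bij_iff by blast
qed

lemma coord_twist_square_in_Alt_Delta:
  assumes "i \<noteq> 1" "1 \<le> k" "c permutes {1..m}"
  shows "coord_twist m k i r (c \<circ> c) \<in> Alt_Delta m k"
proof -
  let ?t = "coord_twist m k i r c"
  have t: "?t permutes Delta m k" by (rule coord_twist_permutes[OF assms])
  then have "permutation ?t" using finite_Delta permutes_imp_permutation by blast
  then have "evenperm (?t \<circ> ?t)" by (simp add: evenperm_comp)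
  moreover have "coord_twist m k i r (c \<circ> c) = ?t \<circ> ?t"
    using coord_twist_comp[OF assms(1,2) permutes_image[OF assms(3), THEN equalityD1]] by simp
  ultimately show ?thesis using permutes_compose[OF t t] unfolding Alt_Delta_def by simp
qed

lemma prod_act_comp_coord_twist:
  assumes i: "i \<in> {2..k}" and c: "c permutes {1..m}"
    and v: "\<forall>j\<in>{1..k}. v j permutes {1..m}" and w: "w permutes {1..k}" "w 1 = 1" "w i = i"
    and v_i: "v i r = r" and v_1: "v 1 \<circ> c = c \<circ> v 1"
  shows "prod_act m k v w \<circ> coord_twist m k i r c = coord_twist m k i r c \<circ> prod_act m k v w"
proof
  fix \<delta>
  let ?f = "prod_act m k v w" and ?t = "coord_twist m k i r c"
  show "(?f \<circ> ?t) \<delta> = (?t \<circ> ?f) \<delta>"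
  proof (cases "\<delta> \<in> Delta m k")
    case False
    then show ?thesis by (simp add: coord_twist_def prod_act_outside)
  next
    case True
    have t_perm: "?t permutes Delta m k" using coord_twist_permutes[OF _ _ c] i by simp
    have t\<delta>: "?t \<delta> \<in> Delta m k" using True t_perm by (simp add: permutes_in_image)
    have f\<delta>: "?f \<delta> \<in> Delta m k" by (rule prod_act_in_Delta[OF v w(1) True])
    have inv_w: "inv w 1 = 1" "inv w i = i" "inv w j \<noteq> 1 \<longleftrightarrow> j \<noteq> 1" for j
      using w permutes_inv_eq[OF w(1)] by metis+
    have "v i permutes {1..m}" using v i by simp
    then have "inj (v i)" by (rule permutes_inj)
    then have v_i_eq: "v i a = r \<longleftrightarrow> a = r" for a using v_i by (metis injD)
    have "?f (?t \<delta>) j = ?t (?f \<delta>) j" if "j \<in> {1..k}" for j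
    proof (cases "j = 1")
      case True
      then show ?thesis using \<open>\<delta> \<in> Delta m k\<close> t\<delta> f\<delta> i inv_w(1,2) v_i_eq v_1
        by (simp add: prod_act_apply coord_twist_apply fun_eq_iff)
    next
      case False
      then show ?thesis using \<open>\<delta> \<in> Delta m k\<close> t\<delta> that inv_w
        by (simp add: prod_act_apply coord_twist_apply_other)
    qed
    moreover have "?f (?t \<delta>) \<in> Delta m k" by (rule prod_act_in_Delta[OF v w(1) t\<delta>])
    moreover have "?t (?f \<delta>) \<in> Delta m k" using f\<delta> t_perm by (simp add: permutes_in_image)
    ultimately show ?thesis unfolding Delta_def comp_apply by (metis PiE_ext)
  qed
qed

lemma ex_in_range_avoiding:
  assumes "3 \<le> m"
  obtains s :: nat where "s \<in> {1..m}" "s \<noteq> a" "s \<noteq> b"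
proof -
  have "\<exists>s :: nat\<in>{1, 2, 3}. s \<noteq> a \<and> s \<noteq> b" by auto
  then obtain s :: nat where "s \<in> {1, 2, 3}" "s \<noteq> a" "s \<noteq> b" by blast
  then show ?thesis using assms that[of s] by auto
qed

locale twist_conjugate =
  fixes m k i r :: nat and v :: "nat \<Rightarrow> nat \<Rightarrow> nat" and w :: "nat \<Rightarrow> nat"
    and g :: "(nat \<Rightarrow> nat) \<Rightarrow> nat \<Rightarrow> nat"
  assumes m_ge_3: "3 \<le> m" and i_range: "i \<in> {2..k}" and r_range: "r \<in> {1..m}"
    and v_permutes: "\<forall>j\<in>{1..k}. v j permutes {1..m}" and w_permutes: "w permutes {1..k}"
    and g_in_M: "g \<in> wreath_M m k"
    and g_conj: "g \<circ> coord_twist m k i r (ucyc m \<circ> ucyc m)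
      = coord_twist m k i r (ucyc m \<circ> ucyc m) \<circ> prod_act m k v w"
begin

definition u2 :: "nat \<Rightarrow> nat" where "u2 = ucyc m \<circ> ucyc m"
abbreviation \<xi> :: "(nat \<Rightarrow> nat) \<Rightarrow> nat \<Rightarrow> nat" where "\<xi> \<equiv> coord_twist m k i r u2"
abbreviation f :: "(nat \<Rightarrow> nat) \<Rightarrow> nat \<Rightarrow> nat" where "f \<equiv> prod_act m k v w"

lemma i_ne_1: "i \<noteq> 1" and i_in: "i \<in> {1..k}" and one_in: "1 \<in> {1..k}"
  using i_range by auto

lemma u2_permutes: "u2 permutes {1..m}"
  using ucyc_permutes m_ge_3 unfolding u2_def by (simp add: permutes_compose)

lemma u2_1: "u2 1 \<noteq> 1"
proof -
  have "3 \<le> ucyc_len m" using m_ge_3 unfolding ucyc_len_def by presburger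
  then show ?thesis by (simp add: u2_def ucyc_eq)
qed

lemma u2_in: "a \<in> {1..m} \<Longrightarrow> u2 a \<in> {1..m}"
  by (rule permutes_in_image[OF u2_permutes, THEN iffD2])

lemma \<xi>_in_Delta: "\<delta> \<in> Delta m k \<Longrightarrow> \<xi> \<delta> \<in> Delta m k"
  using coord_twist_permutes[OF i_ne_1 _ u2_permutes] i_range by (simp add: permutes_in_image)

lemma f_in_Delta: "\<delta> \<in> Delta m k \<Longrightarrow> f \<delta> \<in> Delta m k"
  by (rule prod_act_in_Delta[OF v_permutes w_permutes])

lemma v_eq_iff: "j \<in> {1..k} \<Longrightarrow> v j a = b \<longleftrightarrow> a = inv (v j) b"
  using v_permutes permutes_inv_eq by metis

lemma v_inj: "j \<in> {1..k} \<Longrightarrow> v j a = v j b \<longleftrightarrow> a = b"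
  using v_permutes permutes_inj by (metis injD)

lemma inv_w_in: "j \<in> {1..k} \<Longrightarrow> inv w j \<in> {1..k}"
  using permutes_in_image[OF permutes_inv[OF w_permutes]] by blast

lemma inv_v_in: "j \<in> {1..k} \<Longrightarrow> b \<in> {1..m} \<Longrightarrow> inv (v j) b \<in> {1..m}"
  using v_permutes permutes_in_image permutes_inv by metis

definition probe :: "nat \<Rightarrow> nat \<Rightarrow> nat \<Rightarrow> nat" where
  "probe a b = (\<lambda>j\<in>{1..k}. 1)(1 := a, i := b)"

lemma probe_apply:
  "probe a b j = (if j = i then b else if j = 1 then a else if j \<in> {1..k} then 1 else undefined)"
  unfolding probe_def by simp

lemma probe_in_Delta: "a \<in> {1..m} \<Longrightarrow> b \<in> {1..m} \<Longrightarrow> probe a b \<in> Delta m k"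
  unfolding probe_def using i_range m_ge_3 by (intro fun_upd_in_Delta) (auto simp: Delta_def)

lemma direction_unique:
  assumes "\<epsilon> \<in> Delta m k" "\<epsilon>' \<in> Delta m k" "\<forall>j\<in>{1..k}-{p}. \<xi> \<epsilon> j = \<xi> \<epsilon>' j"
      "\<xi> (f \<epsilon>) a \<noteq> \<xi> (f \<epsilon>') a"
    and "\<eta> \<in> Delta m k" "\<eta>' \<in> Delta m k" "\<forall>j\<in>{1..k}-{q}. \<xi> \<eta> j = \<xi> \<eta>' j"
      "\<xi> (f \<eta>) a \<noteq> \<xi> (f \<eta>') a"
    and "a \<in> {1..k}"
  shows "p = q"
proof -
  have g_\<xi>: "g (\<xi> \<delta>) = \<xi> (f \<delta>)" for \<delta> using fun_cong[OF g_conj, of \<delta>] by (simp add: u2_def)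
  show ?thesis
    using wreath_M_direction_unique[OF g_in_M \<open>a \<in> {1..k}\<close>, of "\<xi> \<epsilon>" "\<xi> \<epsilon>'" p "\<xi> \<eta>" "\<xi> \<eta>'" q]
    by (simp add: g_\<xi> \<xi>_in_Delta assms)
qed

lemma w_fixes_1: "w 1 = 1"
proof (rule ccontr)
  assume "w 1 \<noteq> 1"
  define a where "a = w 1"
  have a: "a \<in> {1..k}" "a \<noteq> 1" "inv w a = 1"
    using \<open>w 1 \<noteq> 1\<close> permutes_in_image[OF w_permutes] permutes_inv_eq[OF w_permutes] one_in
    unfolding a_def by auto
  obtain s where s: "s \<in> {1..m}" "s \<noteq> r" using ex_in_range_avoiding[OF m_ge_3] .
  have D: "probe 1 r \<in> Delta m k" "probe (u2 1) s \<in> Delta m k"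
    "probe 1 s \<in> Delta m k" "probe 2 s \<in> Delta m k"
    using probe_in_Delta u2_in s r_range m_ge_3 by auto
  have "i = 1"
  proof (rule direction_unique[OF D(1,2) _ _ D(3,4) _ _ a(1)])
    show "\<forall>j\<in>{1..k}-{i}. \<xi> (probe 1 r) j = \<xi> (probe (u2 1) s) j"
      using D s by (simp add: coord_twist_apply probe_apply)
    show "\<forall>j\<in>{1..k}-{1}. \<xi> (probe 1 s) j = \<xi> (probe 2 s) j"
      by (simp add: coord_twist_apply_other probe_apply)
    show "\<xi> (f (probe 1 r)) a \<noteq> \<xi> (f (probe (u2 1) s)) a"
      and "\<xi> (f (probe 1 s)) a \<noteq> \<xi> (f (probe 2 s)) a"
      using a D u2_1 i_ne_1
      by (simp_all add: coord_twist_apply_other prod_act_apply v_inj probe_apply)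
  qed
  then show False using i_ne_1 by simp
qed

lemma inv_w_1: "inv w 1 = 1"
  using w_fixes_1 permutes_inv_eq[OF w_permutes] by blast

lemma direction_of_coordinate_1:
  assumes "\<epsilon> \<in> Delta m k" "\<epsilon>' \<in> Delta m k" "\<forall>j\<in>{1..k}-{p}. \<xi> \<epsilon> j = \<xi> \<epsilon>' j"
    and "\<xi> (f \<epsilon>) 1 \<noteq> \<xi> (f \<epsilon>') 1"
  shows "p = 1"
proof -
  define b where "b = inv w i"
  have b: "b \<in> {1..k}" "b \<noteq> 1"
    using inv_w_in[OF i_in] inv_w_1 permutes_inv_eq[OF w_permutes] i_ne_1
    unfolding b_def by auto
  obtain t where t: "t \<in> {1..m}" "t \<noteq> r" "t \<noteq> inv (v i) r"
    using ex_in_range_avoiding[OF m_ge_3] .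
  define \<eta> where "\<eta> = (probe 1 t)(b := t)"
  define \<eta>' where "\<eta>' = (probe 2 t)(b := t)"
  have D: "\<eta> \<in> Delta m k" "\<eta>' \<in> Delta m k"
    unfolding \<eta>_def \<eta>'_def using probe_in_Delta fun_upd_in_Delta b t m_ge_3 by auto
  have i_coord: "\<eta> i \<noteq> r" "\<eta>' i \<noteq> r" "f \<eta> i \<noteq> r" "f \<eta>' i \<noteq> r"
    using D t b i_in
    by (auto simp: \<eta>_def \<eta>'_def probe_apply prod_act_apply v_eq_iff b_def[symmetric])
  show ?thesis
  proof (rule direction_unique[OF assms(1-4) D])
    show "\<forall>j\<in>{1..k}-{1}. \<xi> \<eta> j = \<xi> \<eta>' j"
      by (simp add: coord_twist_apply_other \<eta>_def \<eta>'_def probe_apply)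
    show "\<xi> (f \<eta>) 1 \<noteq> \<xi> (f \<eta>') 1"
      using D b i_coord one_in inv_w_1 i_ne_1
      by (simp add: coord_twist_fixes prod_act_apply v_inj \<eta>_def \<eta>'_def probe_apply)
  qed (rule one_in)
qed

lemma w_fixes_i_and_v_fixes_r: "w i = i \<and> v i r = r"
proof (rule ccontr)
  assume not_fixed: "\<not> (w i = i \<and> v i r = r)"
  define b where "b = inv w i"
  have b: "b \<in> {1..k}" "b \<noteq> 1" "b = i \<longleftrightarrow> w i = i"
    using inv_w_in[OF i_in] inv_w_1 permutes_inv_eq[OF w_permutes] i_ne_1
    unfolding b_def by auto
  define c where "c = inv (v 1) 1"
  define \<beta> where "\<beta> = inv (v i) r"
  have c: "c \<in> {1..m}" "v 1 c = 1" and \<beta>: "\<beta> \<in> {1..m}" "v i \<beta> = r"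
    using inv_v_in one_in i_in r_range m_ge_3 v_eq_iff unfolding c_def \<beta>_def by auto
  obtain s where s: "s \<in> {1..m}" "s \<noteq> r" "s \<noteq> \<beta>"
    using ex_in_range_avoiding[OF m_ge_3] .
  have "v i s \<noteq> r" using s i_in v_eq_iff unfolding \<beta>_def by blast
  define \<epsilon> where "\<epsilon> = (probe c s)(b := \<beta>)"
  define \<epsilon>' where "\<epsilon>' = (probe c s)(b := s)"
  have D: "\<epsilon> \<in> Delta m k" "\<epsilon>' \<in> Delta m k"
    unfolding \<epsilon>_def \<epsilon>'_def using probe_in_Delta fun_upd_in_Delta b c \<beta> s by auto
  have \<epsilon>_i: "\<epsilon> i \<noteq> r" "\<epsilon>' i \<noteq> r"
    using b s \<beta> not_fixed by (auto simp: \<epsilon>_def \<epsilon>'_def probe_apply)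
  text \<open>Coordinate \<open>b\<close> of a point becomes coordinate \<open>i\<close> under \<open>f\<close>, so switching it from
    \<open>\<beta>\<close> to \<open>s\<close> decides whether \<open>\<xi>\<close> moves the image.\<close>
  have "b = 1"
  proof (rule direction_of_coordinate_1[OF D])
    show "\<forall>j\<in>{1..k}-{b}. \<xi> \<epsilon> j = \<xi> \<epsilon>' j"
      using \<epsilon>_i by (simp add: coord_twist_fixes \<epsilon>_def \<epsilon>'_def)
    show "\<xi> (f \<epsilon>) 1 \<noteq> \<xi> (f \<epsilon>') 1"
      using D b c \<beta> \<open>v i s \<noteq> r\<close> u2_1 i_in i_ne_1 one_in f_in_Delta inv_w_1
      by (simp add: coord_twist_apply prod_act_apply \<epsilon>_def \<epsilon>'_def probe_apply
          b_def[symmetric])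
  qed
  then show False using b by simp
qed

lemma v_1_commutes_u2: "v 1 \<circ> u2 = u2 \<circ> v 1"
proof (rule ccontr)
  assume "v 1 \<circ> u2 \<noteq> u2 \<circ> v 1"
  then obtain c where c: "v 1 (u2 c) \<noteq> u2 (v 1 c)" by (auto simp: fun_eq_iff)
  have c_in: "c \<in> {1..m}"
  proof (rule ccontr)
    assume "c \<notin> {1..m}"
    moreover have "v 1 permutes {1..m}" using v_permutes one_in by blast
    ultimately have "u2 c = c" "v 1 c = c" using u2_permutes by (simp_all add: permutes_not_in)
    then show False using c by simp
  qed
  obtain t where t: "t \<in> {1..m}" "t \<noteq> r" using ex_in_range_avoiding[OF m_ge_3] .
  have "inv w i = i" "v i t \<noteq> r"
    using w_fixes_i_and_v_fixes_r permutes_inv_eq[OF w_permutes] v_inj[OF i_in, of t r] t by auto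
  define \<epsilon> where "\<epsilon> = probe c r"
  define \<epsilon>' where "\<epsilon>' = probe (u2 c) t"
  have D: "\<epsilon> \<in> Delta m k" "\<epsilon>' \<in> Delta m k"
    unfolding \<epsilon>_def \<epsilon>'_def using probe_in_Delta u2_in c_in t r_range by auto
  have "i = 1"
  proof (rule direction_of_coordinate_1[OF D])
    show "\<forall>j\<in>{1..k}-{i}. \<xi> \<epsilon> j = \<xi> \<epsilon>' j"
      using D t by (simp add: coord_twist_apply probe_apply \<epsilon>_def \<epsilon>'_def)
    show "\<xi> (f \<epsilon>) 1 \<noteq> \<xi> (f \<epsilon>') 1"
      using D c \<open>inv w i = i\<close> \<open>v i t \<noteq> r\<close> w_fixes_i_and_v_fixes_r inv_w_1 i_in i_ne_1 one_in
        f_in_Delta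
      by (simp add: coord_twist_apply prod_act_apply probe_apply \<epsilon>_def \<epsilon>'_def)
  qed
  then show False using i_ne_1 by simp
qed

lemma prod_act_in_target: "f \<in> target_grp m k i r"
proof -
  have u_eq: "ucyc m = u2 ^^ ((ucyc_len m + 1) div 2)"
    using ucyc_eq_funpow_sq[of m] m_ge_3 unfolding u2_def by simp
  have "v 1 \<circ> ucyc m = ucyc m \<circ> v 1"
    unfolding u_eq by (rule funpow_comp_commute[OF v_1_commutes_u2[symmetric], symmetric])
  then have "v 1 \<in> U_grp m" using commute_ucyc_imp_in_U_grp[OF m_ge_3] v_permutes one_in by blast
  moreover have "v i \<in> T_stab m r"
    using v_permutes i_in w_fixes_i_and_v_fixes_r unfolding T_stab_def by blast
  moreover have "w \<in> W_stab k i"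
    using w_permutes w_fixes_1 w_fixes_i_and_v_fixes_r unfolding W_stab_def by blast
  ultimately show ?thesis using v_permutes unfolding target_grp_def by blast
qed

end

lemma wreath_M_inter_conj_subset_target:
  assumes "3 \<le> m" "i \<in> {2..k}" "r \<in> {1..m}"
  shows "wreath_M m k \<inter> conj_set (coord_twist m k i r (ucyc m \<circ> ucyc m)) (wreath_M m k)
    \<subseteq> target_grp m k i r"
proof
  let ?x = "coord_twist m k i r (ucyc m \<circ> ucyc m)"
  fix h
  assume h: "h \<in> wreath_M m k \<inter> conj_set ?x (wreath_M m k)"
  have "ucyc m \<circ> ucyc m permutes {1..m}" using ucyc_permutes assms(1) by (simp add: permutes_compose)
  then have "bij ?x" using assms(2) by (intro permutes_bij[OF coord_twist_permutes]) auto
  then obtain g where "g \<in> wreath_M m k" "g \<circ> ?x = ?x \<circ> h" using h conj_set_iff by blast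
  moreover obtain v w where "h = prod_act m k v w"
    and "\<forall>j\<in>{1..k}. v j permutes {1..m}" and "w permutes {1..k}"
    using h unfolding wreath_M_def by blast
  ultimately interpret twist_conjugate m k i r v w g using assms by unfold_locales auto
  show "h \<in> target_grp m k i r" using prod_act_in_target \<open>h = prod_act m k v w\<close> by simp
qed

lemma target_subset_wreath_M_inter_conj:
  assumes "3 \<le> m" "i \<in> {2..k}" "r \<in> {1..m}"
  shows "target_grp m k i r
    \<subseteq> wreath_M m k \<inter> conj_set (coord_twist m k i r (ucyc m \<circ> ucyc m)) (wreath_M m k)"
proof
  let ?u2 = "ucyc m \<circ> ucyc m"
  let ?x = "coord_twist m k i r ?u2"
  fix h
  assume "h \<in> target_grp m k i r"
  then obtain v w where h: "h = prod_act m k v w" and v: "\<forall>j\<in>{1..k}. v j permutes {1..m}"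
    and v_1: "v 1 \<in> U_grp m" and v_i: "v i \<in> T_stab m r" and w: "w \<in> W_stab k i"
    unfolding target_grp_def by blast
  have h_M: "h \<in> wreath_M m k" using h v w unfolding wreath_M_def W_stab_def by blast
  have u2: "?u2 permutes {1..m}" using ucyc_permutes assms(1) by (simp add: permutes_compose)
  obtain n where "v 1 = ucyc m ^^ n" using v_1 unfolding U_grp_def by blast
  then have "v 1 \<circ> ?u2 = ?u2 \<circ> v 1"
    using funpow_comp_commute[of "ucyc m" ?u2 n] by (simp add: comp_assoc)
  then have "h \<circ> ?x = ?x \<circ> h"
    using prod_act_comp_coord_twist[OF assms(2) u2 v] v_i w
    unfolding h T_stab_def W_stab_def by blast
  moreover have "bij ?x"
    using assms(2) by (intro permutes_bij[OF coord_twist_permutes[OF _ _ u2]]) auto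
  ultimately show "h \<in> wreath_M m k \<inter> conj_set ?x (wreath_M m k)"
    using h_M conj_set_iff by blast
qed

theorem lemma4p3:
  fixes m k i r :: nat
  assumes "m \<ge> 5" and "k \<ge> 2" and "i \<in> {2..k}" and "r \<in> {1..m}"
  shows "\<exists>x \<in> Alt_Delta m k.
           wreath_M m k \<inter> conj_set x (wreath_M m k) = target_grp m k i r"
proof
  have m: "3 \<le> m" using assms(1) by simp
  show "coord_twist m k i r (ucyc m \<circ> ucyc m) \<in> Alt_Delta m k"
    using coord_twist_square_in_Alt_Delta ucyc_permutes m assms(3) by simp
  show "wreath_M m k \<inter> conj_set (coord_twist m k i r (ucyc m \<circ> ucyc m)) (wreath_M m k)
    = target_grp m k i r"
    using wreath_M_inter_conj_subset_target[OF m assms(3,4)]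
      target_subset_wreath_M_inter_conj[OF m assms(3,4)] by (rule equalityI)
qed

end
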